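(* Let $\mathcal{A}\subset\mathbb{Z}$ be a finite alphabet, let $G=(V,E)$ be a finite directed graph with edge labelling $\ell:E\to\mathcal{A}$, assume the matrix $M=\sum_{a\in\mathcal{A}}M_a$ is primitive, let $\beta>1$ be a Pisot number and let $\nu=(\phi^+)_*(\mu^+)$ as described in the context. If $x\in\mathbb{R}$ satisfies $\nu(\{x\})>0$, then the set $(\phi^+)^{-1}(\{x\})$ is open in $\mathcal{K}^+$.
   Context: For $a\in\mathcal{A}$, $M_a$ is the $V\times V$ matrix with $(M_a)_{ij}=1$ if $(i,j)\in E$ and $\ell((i,j))=a$, and $0$ otherwise. By Perron–Frobenius, $M$ has a dominant eigenvalue $\lambda>0$ with positive left eigenvector $\mathbf v_L$ and right eigenvector $\mathbf v_R$, normalised by $\mathbf v_L^{\mathsf T}\mathbf v_R=1$. $\mathcal{K}^+\subseteq\mathcal{A}^{\mathbb{N}}$ is the set of sequences $(\ell(e_k))_{k\ge1}$ for infinite paths $e_1e_2\ldots$ in $G$ (terminal vertex of $e_j$ equals initial vertex of $e_{j+1}$), with the topology generated by cylinder sets $[\varepsilon_1,\ldots,\varepsilon_k]=\{x\in\mathcal{K}^+: x_1=\varepsilon_1,\ldots,x_k=\varepsilon_k\}$. $\mu^+$ is the Borel probability measure on $\mathcal{K}^+$ with $\mu^+([\varepsilon_1,\ldots,\varepsilon_k])=\lambda^{-k}\mathbf v_L^{\mathsf T}M_{\varepsilon_1}\cdots M_{\varepsilon_k}\mathbf v_R$. A Pisot number is an algebraic integer $>1$ all of whose other Galois conjugates have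 modulus $<1$ (integers $\ge2$ included). $\phi^+:\mathcal{K}^+\to\mathbb{R}$, $(x_k)\mapsto\sum_{k\ge1}x_k\beta^{-k}$, and $\nu(A)=\mu^+((\phi^+)^{-1}(A))$. *)

theory Defs
  imports "HOL-Analysis.Analysis" "HOL-Computational_Algebra.Polynomial" "HOL-Probability.Probability"
begin

text \<open>Pisot number: an algebraic integer greater than 1 all of whose other Galois
  conjugates have modulus less than 1. The conjugates are the complex roots of the
  minimal polynomial, i.e. of the monic irreducible integer polynomial vanishing at it.\<close>
definition pisot :: "real \<Rightarrow> bool" where
  "pisot \<beta> \<longleftrightarrow> \<beta> > 1 \<and>
     (\<exists>p :: int poly. lead_coeff p = 1 \<and> irreducible p \<and> poly (map_poly of_int p) \<beta> = 0 \<and>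
        (\<forall>z::complex. poly (map_poly of_int p) z = 0 \<and> z \<noteq> complex_of_real \<beta> \<longrightarrow> cmod z < 1))"

definition Mlab :: "('v::finite \<times> 'v) set \<Rightarrow> ('v \<times> 'v \<Rightarrow> int) \<Rightarrow> int \<Rightarrow> real^'v^'v" where
  "Mlab E lab a = (\<chi> i j. if (i, j) \<in> E \<and> lab (i, j) = a then 1 else 0)"

definition Mtot :: "int set \<Rightarrow> ('v::finite \<times> 'v) set \<Rightarrow> ('v \<times> 'v \<Rightarrow> int) \<Rightarrow> real^'v^'v" where
  "Mtot A E lab = (\<Sum>a\<in>A. Mlab E lab a)"

definition matpow :: "real^'n^'n \<Rightarrow> nat \<Rightarrow> real^'n^'n" where
  "matpow M k = (((**) M) ^^ k) (mat 1)"

definition primitive_matrix :: "real^'n^'n \<Rightarrow> bool" where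
  "primitive_matrix M \<longleftrightarrow> (\<forall>i j. M $ i $ j \<ge> 0) \<and>
     (\<exists>k>0. \<forall>i j. matpow M k $ i $ j > 0)"

definition Mword :: "('v::finite \<times> 'v) set \<Rightarrow> ('v \<times> 'v \<Rightarrow> int) \<Rightarrow> int list \<Rightarrow> real^'v^'v" where
  "Mword E lab ws = foldr (\<lambda>a P. Mlab E lab a ** P) ws (mat 1)"

text \<open>K^+: label sequences of infinite paths. Sequences are indexed from 0,
  i.e. s 0 is x_1.\<close>
definition Kplus :: "('v \<times> 'v) set \<Rightarrow> ('v \<times> 'v \<Rightarrow> int) \<Rightarrow> (nat \<Rightarrow> int) set" where
  "Kplus E lab = {s. \<exists>p :: nat \<Rightarrow> 'v. \<forall>n. (p n, p (Suc n)) \<in> E \<and> s n = lab (p n, p (Suc n))}"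

definition cyl :: "(nat \<Rightarrow> int) set \<Rightarrow> int list \<Rightarrow> (nat \<Rightarrow> int) set" where
  "cyl K ws = {s \<in> K. \<forall>i<length ws. s i = ws ! i}"

definition Ktop :: "(nat \<Rightarrow> int) set \<Rightarrow> (nat \<Rightarrow> int) topology" where
  "Ktop K = topology_generated_by (range (cyl K))"

definition phi :: "real \<Rightarrow> (nat \<Rightarrow> int) \<Rightarrow> real" where
  "phi \<beta> s = (\<Sum>n. real_of_int (s n) / \<beta> ^ (Suc n))"

end

theory Submission
  imports Defs
begin

(* Call a vertex j split if \<phi> takes two values on the label sequences of paths starting at j.
   A walk from i to a split vertex makes i split too, and primitivity provides such walks, so
   either no vertex or every vertex is split.

   If no vertex is split, \<phi>(K) is finite. Since \<phi> varies by at most 2B/((\<beta>-1)\<beta>^N) on a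
   cylinder of length N (B bounding the digits), every fibre of \<phi> is then a union of cylinders.

   If every vertex is split, every fibre is a null set. Given a cylinder [u] meeting the fibre
   over x, let j maximise (vL M_u)_j. Two sequences from j with far apart \<phi>-values cannot both
   come close to the fibre, so for a suitable fixed N some walk v of length N from j yields a
   cylinder [uv] missing the fibre. As the entry at j carries at least a 1/|V| share of the
   weight of vL M_u, the cylinder [uv] still has a fixed fraction c > 0 of the mass of [u].
   Hence the cylinders of length kN meeting the fibre have total mass at most (1-c)^k. *)

definition words :: "'a set \<Rightarrow> nat \<Rightarrow> 'a list set" where
  "words A n = {xs. set xs \<subseteq> A \<and> length xs = n}"

lemma finite_words: "finite A \<Longrightarrow> finite (words A n)"
  unfolding words_def by (rule finite_lists_length_eq)

lemma words_0 [simp]: "words A 0 = {[]}"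
  by (auto simp: words_def)

lemma sum_words_Suc:
  assumes "finite A"
  shows "(\<Sum>w\<in>words A (Suc n). g w) = (\<Sum>a\<in>A. \<Sum>v\<in>words A n. g (a # v))"
proof -
  have "words A (Suc n) = (\<lambda>(a, v). a # v) ` (A \<times> words A n)"
    by (auto simp: words_def length_Suc_conv image_iff)
  moreover have "inj_on (\<lambda>(a, v). a # v) (A \<times> words A n)"
    by (auto simp: inj_on_def)
  ultimately show ?thesis
    by (simp add: sum.reindex sum.cartesian_product split_def)
qed

lemma sum_words_add:
  assumes "finite A"
  shows "(\<Sum>w\<in>words A (n + m). g w) = (\<Sum>u\<in>words A n. \<Sum>v\<in>words A m. g (u @ v))"
proof -
  have "words A (n + m) = (\<lambda>(u, v). u @ v) ` (words A n \<times> words A m)"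
  proof (intro equalityI subsetI)
    fix w assume "w \<in> words A (n + m)"
    then have "(take n w, drop n w) \<in> words A n \<times> words A m"
      by (auto simp: words_def dest: in_set_takeD in_set_dropD)
    then show "w \<in> (\<lambda>(u, v). u @ v) ` (words A n \<times> words A m)"
      by (intro image_eqI[of _ _ "(take n w, drop n w)"]) auto
  qed (auto simp: words_def)
  moreover have "inj_on (\<lambda>(u, v). u @ v) (words A n \<times> words A m)"
    by (auto simp: inj_on_def words_def)
  ultimately show ?thesis
    by (simp add: sum.reindex sum.cartesian_product split_def)
qed

section \<open>Digit sequences and their \<beta>-expansions\<close>

definition prepend :: "'a list \<Rightarrow> (nat \<Rightarrow> 'a) \<Rightarrow> nat \<Rightarrow> 'a" where
  "prepend w t m = (if m < length w then w ! m else t (m - length w))"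

definition seq_drop :: "nat \<Rightarrow> (nat \<Rightarrow> 'a) \<Rightarrow> nat \<Rightarrow> 'a" where
  "seq_drop n t m = t (m + n)"

lemma prepend_seq_drop: "\<forall>i<length w. s i = w ! i \<Longrightarrow> prepend w (seq_drop (length w) s) = s"
  by (auto simp: prepend_def seq_drop_def)

lemma cyl_append_subset: "cyl K (u @ v) \<subseteq> cyl K u"
  by (auto simp: cyl_def nth_append)

lemma cyl_openin: "openin (Ktop K) (cyl K w)"
  unfolding Ktop_def openin_topology_generated_by_iff
  by (rule generate_topology_on.Basis) simp

definition phi_word :: "real \<Rightarrow> int list \<Rightarrow> real" where
  "phi_word \<beta> w = (\<Sum>i<length w. real_of_int (w ! i) / \<beta> ^ Suc i)"

lemma
  assumes "\<beta> > 1" and "\<forall>n. \<bar>real_of_int (s n)\<bar> \<le> B"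
  shows summable_phi_series: "summable (\<lambda>n. real_of_int (s n) / \<beta> ^ Suc n)"
    and abs_phi_le: "\<bar>phi \<beta> s\<bar> \<le> B / (\<beta> - 1)"
proof -
  define g where "g n = (B / \<beta>) * (1 / \<beta>) ^ n" for n
  have q: "norm (1 / \<beta>) < 1" using assms(1) by simp
  have "summable g" unfolding g_def by (intro summable_mult summable_geometric q)
  have le: "norm (real_of_int (s n) / \<beta> ^ Suc n) \<le> g n" for n
  proof -
    have "norm (real_of_int (s n) / \<beta> ^ Suc n) = \<bar>real_of_int (s n)\<bar> / \<beta> ^ Suc n"
      using assms(1) by (simp add: abs_divide)
    also have "\<dots> \<le> B / \<beta> ^ Suc n" using assms by (intro divide_right_mono) auto
    finally show ?thesis by (simp add: g_def power_divide)
  qed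
  have norms: "summable (\<lambda>n. norm (real_of_int (s n) / \<beta> ^ Suc n))"
    by (rule summable_comparison_test[OF _ \<open>summable g\<close>]) (use le in auto)
  then show "summable (\<lambda>n. real_of_int (s n) / \<beta> ^ Suc n)"
    by (rule summable_norm_cancel)
  have "\<bar>phi \<beta> s\<bar> \<le> (\<Sum>n. norm (real_of_int (s n) / \<beta> ^ Suc n))"
    unfolding phi_def using summable_norm[OF norms] by simp
  also have "\<dots> \<le> suminf g"
    by (rule suminf_le[OF le norms \<open>summable g\<close>])
  also have "suminf g = B / (\<beta> - 1)"
    using assms(1) unfolding g_def suminf_mult[OF summable_geometric[OF q]] suminf_geometric[OF q]
    by (simp add: field_simps)
  finally show "\<bar>phi \<beta> s\<bar> \<le> B / (\<beta> - 1)" .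
qed

lemma phi_prepend:
  assumes "\<beta> > 1" and "\<forall>n. \<bar>real_of_int (t n)\<bar> \<le> B"
  shows "phi \<beta> (prepend w t) = phi_word \<beta> w + phi \<beta> t / \<beta> ^ length w"
proof -
  define f where "f n = real_of_int (prepend w t n) / \<beta> ^ Suc n" for n
  have tail: "f (n + length w) = real_of_int (t n) / \<beta> ^ Suc n / \<beta> ^ length w" for n
    by (simp add: f_def prepend_def power_add field_simps)
  have st: "summable (\<lambda>n. real_of_int (t n) / \<beta> ^ Suc n)"
    using summable_phi_series[OF assms] .
  then have "summable (\<lambda>n. f (n + length w))"
    unfolding tail by (rule summable_divide)
  then have "summable f"
    by (rule summable_iff_shift[THEN iffD1])
  then have "phi \<beta> (prepend w t) = (\<Sum>n. f (n + length w)) + (\<Sum>i<length w. f i)"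
    unfolding phi_def f_def by (rule suminf_split_initial_segment)
  also have "(\<Sum>n. f (n + length w)) = phi \<beta> t / \<beta> ^ length w"
    unfolding tail phi_def by (rule suminf_divide[OF st])
  also have "(\<Sum>i<length w. f i) = phi_word \<beta> w"
    by (simp add: phi_word_def f_def prepend_def)
  finally show ?thesis by simp
qed

lemma abs_phi_diff_le_common_prefix:
  assumes "\<beta> > 1" and "\<forall>n. \<bar>real_of_int (s n)\<bar> \<le> B" and "\<forall>n. \<bar>real_of_int (t n)\<bar> \<le> B"
    and "\<forall>i<N. s i = t i"
  shows "\<bar>phi \<beta> s - phi \<beta> t\<bar> \<le> 2 * B / (\<beta> - 1) / \<beta> ^ N"
proof -
  define w where "w = map s [0..<N]"
  have bounds: "\<forall>n. \<bar>real_of_int (seq_drop N s n)\<bar> \<le> B" "\<forall>n. \<bar>real_of_int (seq_drop N t n)\<bar> \<le> B"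
    using assms(2,3) by (simp_all add: seq_drop_def)
  have "s = prepend w (seq_drop N s)" "t = prepend w (seq_drop N t)"
    using prepend_seq_drop[of w s] prepend_seq_drop[of w t] assms(4) by (auto simp: w_def)
  then have "\<bar>phi \<beta> s - phi \<beta> t\<bar> = \<bar>phi \<beta> (seq_drop N s) - phi \<beta> (seq_drop N t)\<bar> / \<beta> ^ N"
    using phi_prepend[OF assms(1) bounds(1), of w] phi_prepend[OF assms(1) bounds(2), of w] assms(1)
    by (simp add: w_def abs_divide flip: diff_divide_distrib)
  also have "\<dots> \<le> 2 * B / (\<beta> - 1) / \<beta> ^ N"
    using abs_phi_le[OF assms(1) bounds(1)] abs_phi_le[OF assms(1) bounds(2)] assms(1)
    by (intro divide_right_mono) auto
  finally show ?thesis .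
qed

lemma exists_power_inverse_less:
  fixes \<beta> C \<delta> :: real
  assumes "\<beta> > 1" and "\<delta> > 0"
  shows "\<exists>N. C / \<beta> ^ N < \<delta>"
proof -
  obtain N where "C / \<delta> < \<beta> ^ N" using real_arch_pow[OF assms(1)] by blast
  then have "C / \<beta> ^ N < \<delta>" using assms by (simp add: divide_less_eq mult.commute)
  then show ?thesis ..
qed

section \<open>Walks and label sequences\<close>

fun walk :: "('v \<times> 'v) set \<Rightarrow> ('v \<times> 'v \<Rightarrow> int) \<Rightarrow> 'v \<Rightarrow> int list \<Rightarrow> 'v \<Rightarrow> bool" where
  "walk E lab i [] j \<longleftrightarrow> i = j"
| "walk E lab i (a # w) j \<longleftrightarrow> (\<exists>k. (i, k) \<in> E \<and> lab (i, k) = a \<and> walk E lab k w j)"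

lemma set_walk_subset: "walk E lab i w j \<Longrightarrow> set w \<subseteq> lab ` E"
  by (induction w arbitrary: i) auto

definition Kplus_from :: "('v \<times> 'v) set \<Rightarrow> ('v \<times> 'v \<Rightarrow> int) \<Rightarrow> 'v \<Rightarrow> (nat \<Rightarrow> int) set" where
  "Kplus_from E lab j =
     {s. \<exists>p. p 0 = j \<and> (\<forall>n. (p n, p (Suc n)) \<in> E \<and> s n = lab (p n, p (Suc n)))}"

lemma Kplus_eq_UN_Kplus_from: "Kplus E lab = (\<Union>j. Kplus_from E lab j)"
  by (auto simp: Kplus_from_def Kplus_def)

lemma Kplus_from_unfold:
  "t \<in> Kplus_from E lab j \<longleftrightarrow>
     (\<exists>k. (j, k) \<in> E \<and> t 0 = lab (j, k) \<and> seq_drop 1 t \<in> Kplus_from E lab k)"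
proof
  assume "t \<in> Kplus_from E lab j"
  then obtain p where "p 0 = j" "\<forall>n. (p n, p (Suc n)) \<in> E \<and> t n = lab (p n, p (Suc n))"
    by (auto simp: Kplus_from_def)
  then show "\<exists>k. (j, k) \<in> E \<and> t 0 = lab (j, k) \<and> seq_drop 1 t \<in> Kplus_from E lab k"
    unfolding Kplus_from_def seq_drop_def
    by (intro exI[of _ "p 1"] conjI CollectI exI[of _ "\<lambda>n. p (Suc n)"]) auto
next
  assume "\<exists>k. (j, k) \<in> E \<and> t 0 = lab (j, k) \<and> seq_drop 1 t \<in> Kplus_from E lab k"
  then obtain k p where "(j, k) \<in> E" "t 0 = lab (j, k)" "p 0 = k"
    and p: "\<forall>n. (p n, p (Suc n)) \<in> E \<and> t (Suc n) = lab (p n, p (Suc n))"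
    by (auto simp: Kplus_from_def seq_drop_def)
  then have "\<forall>n. (case_nat j p n, case_nat j p (Suc n)) \<in> E \<and>
      t n = lab (case_nat j p n, case_nat j p (Suc n))"
    by (auto split: nat.split)
  then show "t \<in> Kplus_from E lab j"
    unfolding Kplus_from_def by (intro CollectI exI[of _ "case_nat j p"]) simp
qed

lemma prepend_in_Kplus_from:
  "walk E lab i w j \<Longrightarrow> t \<in> Kplus_from E lab j \<Longrightarrow> prepend w t \<in> Kplus_from E lab i"
proof (induction w arbitrary: i)
  case (Cons a w)
  then obtain k where "(i, k) \<in> E" "lab (i, k) = a" "prepend w t \<in> Kplus_from E lab k"
    by auto
  moreover have "seq_drop 1 (prepend (a # w) t) = prepend w t"
    by (auto simp: seq_drop_def prepend_def)
  ultimately show ?case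
    by (subst Kplus_from_unfold) (auto simp: prepend_def)
qed (simp add: prepend_def [abs_def])

lemma walk_prefix:
  "t \<in> Kplus_from E lab j \<Longrightarrow>
     \<exists>k. walk E lab j (map t [0..<N]) k \<and> seq_drop N t \<in> Kplus_from E lab k"
proof (induction N arbitrary: t j)
  case 0
  then show ?case by (simp add: seq_drop_def)
next
  case (Suc N)
  obtain k where k: "(j, k) \<in> E" "t 0 = lab (j, k)" "seq_drop 1 t \<in> Kplus_from E lab k"
    using Suc.prems Kplus_from_unfold by metis
  obtain k' where "walk E lab k (map (seq_drop 1 t) [0..<N]) k'"
    and "seq_drop N (seq_drop 1 t) \<in> Kplus_from E lab k'"
    using Suc.IH[OF k(3)] by blast
  moreover have "map t [0..<Suc N] = t 0 # map (seq_drop 1 t) [0..<N]"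
    by (subst map_upt_Suc) (simp add: seq_drop_def)
  moreover have "seq_drop N (seq_drop 1 t) = seq_drop (Suc N) t"
    by (simp add: seq_drop_def fun_eq_iff)
  ultimately show ?case
    using k(1,2) by auto
qed

lemma seq_drop_in_Kplus:
  assumes "t \<in> Kplus E lab"
  shows "seq_drop n t \<in> Kplus E lab"
proof -
  obtain j where "t \<in> Kplus_from E lab j"
    using assms unfolding Kplus_eq_UN_Kplus_from by blast
  then obtain k where "seq_drop n t \<in> Kplus_from E lab k"
    using walk_prefix[of t E lab j n] by blast
  then show ?thesis
    unfolding Kplus_eq_UN_Kplus_from by blast
qed

lemma Kplus_digit_in_labels: "t \<in> Kplus E lab \<Longrightarrow> t n \<in> lab ` E"
  by (auto simp: Kplus_def)

lemma Kplus_digits_bounded: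
  fixes E :: "('v::finite \<times> 'v) set"
  shows "\<exists>B. \<forall>t\<in>Kplus E lab. \<forall>n. \<bar>real_of_int (t n)\<bar> \<le> B"
proof (intro exI ballI allI)
  fix t n assume "t \<in> Kplus E lab"
  then obtain e where "e \<in> E" "t n = lab e" using Kplus_digit_in_labels by blast
  moreover have "\<bar>real_of_int (lab e)\<bar> \<le> (\<Sum>e\<in>E. \<bar>real_of_int (lab e)\<bar>)" if "e \<in> E" for e
    by (rule member_le_sum) (use that in auto)
  ultimately show "\<bar>real_of_int (t n)\<bar> \<le> (\<Sum>e\<in>E. \<bar>real_of_int (lab e)\<bar>)"
    by simp
qed

section \<open>Label matrices\<close>

lemma Mword_Nil [simp]: "Mword E lab [] = mat 1"
  by (simp add: Mword_def)

lemma Mword_Cons [simp]: "Mword E lab (a # w) = Mlab E lab a ** Mword E lab w"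
  by (simp add: Mword_def)

lemma Mword_append: "Mword E lab (u @ v) = Mword E lab u ** Mword E lab v"
  by (induction u) (auto simp: matrix_mul_assoc)

lemma Mword_nonneg:
  fixes E :: "('v::finite \<times> 'v) set"
  shows "0 \<le> Mword E lab w $ i $ j"
  by (induction w arbitrary: i)
    (auto simp: mat_def matrix_matrix_mult_def Mlab_def intro!: sum_nonneg)

lemma Mword_ge_1_if_walk:
  fixes E :: "('v::finite \<times> 'v) set"
  shows "walk E lab i w j \<Longrightarrow> 1 \<le> Mword E lab w $ i $ j"
proof (induction w arbitrary: i)
  case (Cons a w)
  then obtain k where k: "(i, k) \<in> E" "lab (i, k) = a" "1 \<le> Mword E lab w $ k $ j"
    by auto
  have "1 \<le> Mlab E lab a $ i $ k * Mword E lab w $ k $ j"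
    using k by (simp add: Mlab_def)
  also have "\<dots> \<le> (\<Sum>l\<in>UNIV. Mlab E lab a $ i $ l * Mword E lab w $ l $ j)"
    by (rule member_le_sum) (auto simp: Mlab_def Mword_nonneg)
  finally show ?case by (simp add: matrix_matrix_mult_def)
qed (simp add: mat_def)

lemma walk_if_matpow_Mtot_nonzero:
  fixes E :: "('v::finite \<times> 'v) set"
  shows "matpow (Mtot A E lab) n $ i $ j \<noteq> 0 \<Longrightarrow> \<exists>w. walk E lab i w j"
proof (induction n arbitrary: i)
  case 0
  then have "walk E lab i [] j" by (simp add: matpow_def mat_def split: if_splits)
  then show ?case ..
next
  case (Suc n)
  have "(\<Sum>k\<in>UNIV. Mtot A E lab $ i $ k * matpow (Mtot A E lab) n $ k $ j) \<noteq> 0"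
    using Suc.prems by (simp add: matpow_def matrix_matrix_mult_def)
  then obtain k where "Mtot A E lab $ i $ k * matpow (Mtot A E lab) n $ k $ j \<noteq> 0"
    using sum.not_neutral_contains_not_neutral by blast
  then have k: "Mtot A E lab $ i $ k \<noteq> 0" "matpow (Mtot A E lab) n $ k $ j \<noteq> 0"
    by auto
  have "(\<Sum>a\<in>A. Mlab E lab a $ i $ k) \<noteq> 0"
    using k(1) by (simp add: Mtot_def)
  then obtain a where "Mlab E lab a $ i $ k \<noteq> 0"
    using sum.not_neutral_contains_not_neutral by blast
  then have "(i, k) \<in> E" by (simp add: Mlab_def split: if_splits)
  moreover obtain w where "walk E lab k w j" using Suc.IH[OF k(2)] by blast
  ultimately have "walk E lab i (lab (i, k) # w) j" by auto
  then show ?case ..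
qed

lemma sum_matrix_vector_mult:
  "finite I \<Longrightarrow> (\<Sum>i\<in>I. f i) *v (x::real^'n) = (\<Sum>i\<in>I. (f i :: real^'n^'m) *v x)"
  by (induction I rule: finite_induct) (auto simp: matrix_vector_mult_add_rdistrib)

lemma sum_Mword_mult_eigenvector:
  fixes E :: "('v::finite \<times> 'v) set"
  assumes "finite A" and "Mtot A E lab *v vR = lam *\<^sub>R vR"
  shows "(\<Sum>w\<in>words A n. Mword E lab w *v vR) = lam ^ n *\<^sub>R vR"
proof (induction n)
  case (Suc n)
  have "(\<Sum>w\<in>words A (Suc n). Mword E lab w *v vR)
      = (\<Sum>a\<in>A. Mlab E lab a *v (\<Sum>v\<in>words A n. Mword E lab v *v vR))"
    by (simp add: sum_words_Suc[OF assms(1)] vec.sum matrix_vector_mul_assoc)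
  also have "\<dots> = lam ^ n *\<^sub>R (Mtot A E lab *v vR)"
    by (simp add: Suc.IH Mtot_def sum_matrix_vector_mult[OF assms(1)] scaleR_sum_right
        matrix_vector_mult_scaleR)
  finally show ?case using assms(2) by simp
qed simp

section \<open>Fibres of \<phi>\<close>

lemma phi_nonconstant_from_every_vertex:
  fixes E :: "('v::finite \<times> 'v) set"
  assumes "primitive_matrix (Mtot A E lab)" and "\<beta> > 1"
    and "\<forall>t\<in>Kplus E lab. \<forall>n. \<bar>real_of_int (t n)\<bar> \<le> B"
    and "t1 \<in> Kplus_from E lab j" "t2 \<in> Kplus_from E lab j" "phi \<beta> t1 \<noteq> phi \<beta> t2"
  shows "\<exists>s1\<in>Kplus_from E lab i. \<exists>s2\<in>Kplus_from E lab i. phi \<beta> s1 \<noteq> phi \<beta> s2"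
proof -
  obtain w where w: "walk E lab i w j"
    using assms(1) walk_if_matpow_Mtot_nonzero unfolding primitive_matrix_def
    by (metis less_irrefl)
  have "\<forall>n. \<bar>real_of_int (t1 n)\<bar> \<le> B" "\<forall>n. \<bar>real_of_int (t2 n)\<bar> \<le> B"
    using assms(3-5) Kplus_eq_UN_Kplus_from by blast+
  then have "phi \<beta> (prepend w t1) \<noteq> phi \<beta> (prepend w t2)"
    using phi_prepend[OF assms(2)] assms(2,6) by simp
  then show ?thesis
    using prepend_in_Kplus_from[OF w] assms(4,5) by blast
qed

lemma finite_phi_image_if_constant_from_vertices:
  fixes E :: "('v::finite \<times> 'v) set"
  assumes "\<And>j. \<forall>t1\<in>Kplus_from E lab j. \<forall>t2\<in>Kplus_from E lab j. phi \<beta> t1 = phi \<beta> t2"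
  shows "finite (phi \<beta> ` Kplus E lab)"
proof -
  have "finite (phi \<beta> ` Kplus_from E lab j)" for j
  proof (cases "Kplus_from E lab j = {}")
    case False
    then obtain t0 where "t0 \<in> Kplus_from E lab j" by blast
    then have "phi \<beta> ` Kplus_from E lab j \<subseteq> {phi \<beta> t0}"
      using assms[of j] by blast
    then show ?thesis by (rule finite_subset) simp
  qed simp
  moreover have "phi \<beta> ` Kplus E lab = (\<Union>j. phi \<beta> ` Kplus_from E lab j)"
    by (simp add: Kplus_eq_UN_Kplus_from image_UN)
  ultimately show ?thesis by simp
qed

lemma fibre_openin_if_finite_image:
  assumes "\<beta> > 1" and bd: "\<forall>t\<in>K. \<forall>n. \<bar>real_of_int (t n)\<bar> \<le> B"
    and "finite (phi \<beta> ` K)"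
  shows "openin (Ktop K) {s \<in> K. phi \<beta> s = x}"
proof -
  define F where "F = {s \<in> K. phi \<beta> s = x}"
  obtain \<delta> where "\<delta> > 0" and gap: "\<forall>y\<in>phi \<beta> ` K. y \<noteq> x \<longrightarrow> \<delta> \<le> dist x y"
    using finite_set_avoid[OF assms(3)] by blast
  obtain N where N: "2 * B / (\<beta> - 1) / \<beta> ^ N < \<delta>"
    using exists_power_inverse_less[OF assms(1) \<open>\<delta> > 0\<close>] by blast
  have "cyl K (map s [0..<N]) \<subseteq> F" if "s \<in> F" for s
  proof
    fix t assume t: "t \<in> cyl K (map s [0..<N])"
    then have "\<bar>phi \<beta> s - phi \<beta> t\<bar> \<le> 2 * B / (\<beta> - 1) / \<beta> ^ N"
      using that bd by (intro abs_phi_diff_le_common_prefix[OF assms(1)]) (auto simp: F_def cyl_def)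
    then have "dist x (phi \<beta> t) < \<delta>" using that N by (simp add: F_def dist_real_def)
    then show "t \<in> F" using gap t by (force simp: F_def cyl_def)
  qed
  moreover have "s \<in> cyl K (map s [0..<N])" if "s \<in> F" for s
    using that by (simp add: cyl_def F_def)
  ultimately have "F = (\<Union>s\<in>F. cyl K (map s [0..<N]))" by blast
  also have "openin (Ktop K) \<dots>" by (intro openin_Union) (auto intro: cyl_openin)
  finally show ?thesis unfolding F_def .
qed

lemma exists_walk_cyl_avoiding:
  assumes "\<beta> > 1" and bd: "\<forall>t\<in>Kplus E lab. \<forall>n. \<bar>real_of_int (t n)\<bar> \<le> B"
    and "t1 \<in> Kplus_from E lab j" "t2 \<in> Kplus_from E lab j"
    and far: "4 * B / (\<beta> - 1) / \<beta> ^ N < \<bar>phi \<beta> t1 - phi \<beta> t2\<bar>"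
  shows "\<exists>v k. length v = N \<and> walk E lab j v k \<and> (\<forall>t\<in>cyl (Kplus E lab) v. phi \<beta> t \<noteq> y)"
proof (rule ccontr)
  assume "\<not> ?thesis"
  then have hit: "\<exists>t\<in>cyl (Kplus E lab) v. phi \<beta> t = y" if "length v = N" "walk E lab j v k" for v k
    using that by blast
  have close: "\<bar>phi \<beta> s - y\<bar> \<le> 2 * B / (\<beta> - 1) / \<beta> ^ N" if s: "s \<in> Kplus_from E lab j" for s
  proof -
    obtain k where "walk E lab j (map s [0..<N]) k" using walk_prefix[OF s, of N] by blast
    then obtain t where t: "t \<in> cyl (Kplus E lab) (map s [0..<N])" "phi \<beta> t = y"
      using hit[of "map s [0..<N]" k] by auto
    have "s \<in> Kplus E lab" using s unfolding Kplus_eq_UN_Kplus_from by blast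
    then have "\<bar>phi \<beta> s - phi \<beta> t\<bar> \<le> 2 * B / (\<beta> - 1) / \<beta> ^ N"
      using bd t(1) by (intro abs_phi_diff_le_common_prefix[OF assms(1)]) (auto simp: cyl_def)
    then show ?thesis using t(2) by simp
  qed
  have "\<bar>phi \<beta> t1 - phi \<beta> t2\<bar> \<le> 2 * (2 * B / (\<beta> - 1) / \<beta> ^ N)"
    using close[OF assms(3)] close[OF assms(4)] by linarith
  then show False using far by simp
qed

lemma exists_uniform_separation:
  fixes E :: "('v::finite \<times> 'v) set"
  assumes "\<beta> > 1"
    and "\<And>j. \<exists>t1\<in>Kplus_from E lab j. \<exists>t2\<in>Kplus_from E lab j. phi \<beta> t1 \<noteq> phi \<beta> t2"
  shows "\<exists>N. \<forall>j. \<exists>t1\<in>Kplus_from E lab j. \<exists>t2\<in>Kplus_from E lab j.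
           C / \<beta> ^ N < \<bar>phi \<beta> t1 - phi \<beta> t2\<bar>"
proof -
  obtain T1 T2 where T: "\<And>j. T1 j \<in> Kplus_from E lab j" "\<And>j. T2 j \<in> Kplus_from E lab j"
    "\<And>j. phi \<beta> (T1 j) \<noteq> phi \<beta> (T2 j)"
    using assms(2) by metis
  define d where "d = Min (range (\<lambda>j. \<bar>phi \<beta> (T1 j) - phi \<beta> (T2 j)\<bar>))"
  have "d > 0" using T(3) by (simp add: d_def)
  then obtain N where N: "C / \<beta> ^ N < d"
    using exists_power_inverse_less[OF assms(1)] by blast
  have "C / \<beta> ^ N < \<bar>phi \<beta> (T1 j) - phi \<beta> (T2 j)\<bar>" for j
    using N by (rule less_le_trans) (simp add: d_def)
  then show ?thesis using T(1,2) by blast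
qed

lemma cyl_append_disjoint_fibre:
  assumes "\<beta> > 1" and bd: "\<forall>t\<in>Kplus E lab. \<forall>n. \<bar>real_of_int (t n)\<bar> \<le> B"
    and avoid: "\<forall>t\<in>cyl (Kplus E lab) v. phi \<beta> t \<noteq> \<beta> ^ length u * (x - phi_word \<beta> u)"
  shows "cyl (Kplus E lab) (u @ v) \<inter> {s \<in> Kplus E lab. phi \<beta> s = x} = {}"
proof (intro equals0I)
  fix t assume "t \<in> cyl (Kplus E lab) (u @ v) \<inter> {s \<in> Kplus E lab. phi \<beta> s = x}"
  then have t: "t \<in> Kplus E lab" "\<forall>i<length (u @ v). t i = (u @ v) ! i" "phi \<beta> t = x"
    by (auto simp: cyl_def)
  define t' where "t' = seq_drop (length u) t"
  have "t' \<in> Kplus E lab" using seq_drop_in_Kplus[OF t(1)] by (simp add: t'_def)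
  moreover have "t' i = v ! i" if "i < length v" for i
    using that t(2)[rule_format, of "i + length u"] by (simp add: t'_def seq_drop_def nth_append)
  ultimately have "t' \<in> cyl (Kplus E lab) v" by (simp add: cyl_def)
  have "\<forall>i<length u. t i = u ! i" using t(2) by (simp add: nth_append)
  then have "t = prepend u t'" unfolding t'_def by (rule prepend_seq_drop[symmetric])
  then have "x = phi_word \<beta> u + phi \<beta> t' / \<beta> ^ length u"
    using phi_prepend[OF assms(1)] bd \<open>t' \<in> Kplus E lab\<close> t(3) by auto
  then have "phi \<beta> t' = \<beta> ^ length u * (x - phi_word \<beta> u)"
    using assms(1) by (simp add: field_simps)
  then show False using avoid \<open>t' \<in> cyl (Kplus E lab) v\<close> by blast
qed

section \<open>Mass of cylinders\<close>

lemma sum_words_geometric_decay: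
  fixes m :: "'a list \<Rightarrow> real"
  assumes "finite A" and "c \<le> 1"
    and m_nonneg: "\<And>w. 0 \<le> m w"
    and m_additive: "\<And>u. (\<Sum>v\<in>words A N. m (u @ v)) = m u"
    and P_prefix: "\<And>u v. P (u @ v) \<Longrightarrow> P u"
    and escape: "\<And>u. P u \<Longrightarrow> \<exists>v\<in>words A N. \<not> P (u @ v) \<and> c * m u \<le> m (u @ v)"
  shows "(\<Sum>w\<in>words A (k * N). if P w then m w else 0) \<le> (1 - c) ^ k * m []"
proof (induction k)
  case (Suc k)
  have step: "(\<Sum>v\<in>words A N. if P (u @ v) then m (u @ v) else 0) \<le> (1 - c) * (if P u then m u else 0)"
    for u
  proof (cases "P u")
    case True
    then obtain v0 where v0: "v0 \<in> words A N" "\<not> P (u @ v0)" "c * m u \<le> m (u @ v0)"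
      using escape by blast
    have "(\<Sum>v\<in>words A N. if P (u @ v) then m (u @ v) else 0) \<le> (\<Sum>v\<in>words A N - {v0}. m (u @ v))"
      using v0 finite_words[OF assms(1)] by (simp add: sum.remove m_nonneg sum_mono)
    also have "\<dots> = m u - m (u @ v0)"
      using v0(1) finite_words[OF assms(1)] by (simp add: sum_diff1 m_additive)
    finally show ?thesis using v0(3) True by (simp add: algebra_simps)
  next
    case False
    then have "\<not> P (u @ v)" for v using P_prefix by blast
    then show ?thesis using False by simp
  qed
  have "(\<Sum>w\<in>words A (Suc k * N). if P w then m w else 0)
      = (\<Sum>u\<in>words A (k * N). \<Sum>v\<in>words A N. if P (u @ v) then m (u @ v) else 0)"
    unfolding mult_Suc add.commute[of N] by (rule sum_words_add[OF assms(1)])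
  also have "\<dots> \<le> (1 - c) * (\<Sum>u\<in>words A (k * N). if P u then m u else 0)"
    by (simp add: sum_distrib_left sum_mono step)
  also have "\<dots> \<le> (1 - c) * ((1 - c) ^ k * m [])"
    using Suc.IH assms(2) by (intro mult_left_mono) auto
  finally show ?case by simp
next
  case 0
  show ?case unfolding mult_0 words_0 by (simp add: m_nonneg)
qed

lemma measure_le_sum_cyl_meeting:
  assumes "finite_measure \<mu>" and "finite A" and "F \<subseteq> K" and "\<forall>s\<in>K. \<forall>n. s n \<in> A"
    and "\<And>w. cyl K w \<in> sets \<mu>"
  shows "measure \<mu> F \<le> (\<Sum>w\<in>words A n. if cyl K w \<inter> F \<noteq> {} then measure \<mu> (cyl K w) else 0)"
proof -
  interpret finite_measure \<mu> by (rule assms(1))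
  define W where "W = {w \<in> words A n. cyl K w \<inter> F \<noteq> {}}"
  have "finite W" using finite_words[OF assms(2)] by (simp add: W_def)
  have "F \<subseteq> (\<Union>w\<in>W. cyl K w)"
  proof
    fix s assume "s \<in> F"
    moreover have "map s [0..<n] \<in> words A n" "s \<in> cyl K (map s [0..<n])"
      using \<open>s \<in> F\<close> assms(3,4) by (auto simp: words_def cyl_def)
    ultimately show "s \<in> (\<Union>w\<in>W. cyl K w)" unfolding W_def by blast
  qed
  then have "measure \<mu> F \<le> measure \<mu> (\<Union>w\<in>W. cyl K w)"
    using \<open>finite W\<close> assms(5) by (intro finite_measure_mono) auto
  also have "\<dots> \<le> (\<Sum>w\<in>W. measure \<mu> (cyl K w))"
    using \<open>finite W\<close> assms(5) by (intro measure_UNION_le) auto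
  finally show ?thesis
    by (simp add: W_def sum.inter_filter[OF finite_words[OF assms(2)]])
qed

locale eigen_cylinder_mass =
  fixes A :: "int set" and E :: "('v::finite \<times> 'v) set" and lab :: "'v \<times> 'v \<Rightarrow> int"
    and lam :: real and vL vR :: "real^'v"
  assumes finite_alphabet: "finite A" and labels_in_alphabet: "lab ` E \<subseteq> A"
    and lam_pos: "lam > 0" and right_eigenvector: "Mtot A E lab *v vR = lam *\<^sub>R vR"
    and vL_pos: "\<forall>i. vL $ i > 0" and vR_pos: "\<forall>i. vR $ i > 0"
begin

definition mass :: "int list \<Rightarrow> real" where
  "mass w = vL \<bullet> (Mword E lab w *v vR) / lam ^ length w"

definition retained_fraction :: "nat \<Rightarrow> real" where
  "retained_fraction n = Min (range (($) vR)) / (lam ^ n * CARD('v) * Max (range (($) vR)))"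

lemma retained_fraction_pos: "retained_fraction n > 0"
  using vR_pos lam_pos by (simp add: retained_fraction_def Max_gr_iff)

lemma vR_nonneg: "0 \<le> vR $ i"
  using vR_pos less_imp_le by blast

lemma Mword_mult_vR_nonneg: "0 \<le> (Mword E lab w *v vR) $ i"
  by (auto simp: matrix_vector_mult_def intro!: sum_nonneg mult_nonneg_nonneg Mword_nonneg vR_nonneg)

lemma vL_mult_Mword_nonneg: "0 \<le> (vL v* Mword E lab w) $ i"
  using vL_pos by (auto simp: vector_matrix_mult_def Mword_nonneg less_imp_le intro!: sum_nonneg)

lemma mass_nonneg: "0 \<le> mass w"
  using vL_pos lam_pos Mword_mult_vR_nonneg
  by (auto simp: mass_def inner_vec_def less_imp_le intro!: divide_nonneg_pos sum_nonneg)

lemma sum_mass_append: "(\<Sum>v\<in>words A N. mass (u @ v)) = mass u"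
proof -
  have "(\<Sum>v\<in>words A N. mass (u @ v))
      = vL \<bullet> (Mword E lab u *v (\<Sum>v\<in>words A N. Mword E lab v *v vR)) / lam ^ (length u + N)"
    by (auto simp: mass_def words_def Mword_append matrix_vector_mul_assoc vec.sum inner_sum_right
        sum_divide_distrib intro: sum.cong)
  also have "\<dots> = mass u"
    using lam_pos
    by (simp add: sum_Mword_mult_eigenvector[OF finite_alphabet right_eigenvector] mass_def
        matrix_vector_mult_scaleR power_add)
  finally show ?thesis .
qed

lemma mass_le_max_entry:
  assumes "\<forall>l. (vL v* Mword E lab u) $ l \<le> (vL v* Mword E lab u) $ j"
  shows "mass u \<le> CARD('v) * ((vL v* Mword E lab u) $ j * Max (range (($) vR))) / lam ^ length u"
proof -
  define a where "a = vL v* Mword E lab u"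
  have "a \<bullet> vR \<le> (\<Sum>l\<in>(UNIV :: 'v set). a $ j * Max (range (($) vR)))"
    unfolding inner_vec_def inner_real_def
  proof (rule sum_mono)
    fix l
    show "a $ l * vR $ l \<le> a $ j * Max (range (($) vR))"
      using assms vL_mult_Mword_nonneg[of u j] vR_nonneg[of l]
      unfolding a_def by (intro mult_mono) auto
  qed
  then show ?thesis
    using lam_pos by (simp add: mass_def a_def dot_lmul_matrix divide_right_mono)
qed

lemma mass_append_ge_entry:
  assumes "walk E lab j v k"
  shows "(vL v* Mword E lab u) $ j * Min (range (($) vR))
         \<le> lam ^ (length u + length v) * mass (u @ v)"
proof -
  define a where "a = vL v* Mword E lab u"
  have "Min (range (($) vR)) \<le> vR $ k" by simp
  also have "\<dots> \<le> Mword E lab v $ j $ k * vR $ k"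
    using mult_right_mono[OF Mword_ge_1_if_walk[OF assms] vR_nonneg[of k]] by simp
  also have "\<dots> \<le> (Mword E lab v *v vR) $ j"
    unfolding matrix_vector_mult_def vec_lambda_beta
    by (rule member_le_sum) (auto intro: mult_nonneg_nonneg Mword_nonneg vR_nonneg)
  finally have "a $ j * Min (range (($) vR)) \<le> a $ j * (Mword E lab v *v vR) $ j"
    by (simp add: a_def mult_left_mono vL_mult_Mword_nonneg)
  also have "\<dots> \<le> a \<bullet> (Mword E lab v *v vR)"
    unfolding inner_vec_def inner_real_def
    by (rule member_le_sum) (auto simp: a_def vL_mult_Mword_nonneg Mword_mult_vR_nonneg)
  also have "\<dots> = lam ^ (length u + length v) * mass (u @ v)"
    using lam_pos by (simp add: mass_def a_def dot_lmul_matrix Mword_append matrix_vector_mul_assoc)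
  finally show ?thesis by (simp add: a_def)
qed

lemma mass_append_ge:
  assumes "\<forall>l. (vL v* Mword E lab u) $ l \<le> (vL v* Mword E lab u) $ j"
    and "walk E lab j v k"
  shows "retained_fraction (length v) * mass u \<le> mass (u @ v)"
proof -
  define r0 where "r0 = Min (range (($) vR))"
  define r1 where "r1 = Max (range (($) vR))"
  define aj where "aj = (vL v* Mword E lab u) $ j"
  have "r1 > 0" using vR_pos by (simp add: r1_def Max_gr_iff)
  have "retained_fraction (length v) * mass u
      \<le> retained_fraction (length v) * (CARD('v) * (aj * r1) / lam ^ length u)"
    using mass_le_max_entry[OF assms(1)] retained_fraction_pos[of "length v"]
    unfolding aj_def r1_def by (intro mult_left_mono) auto
  also have "\<dots> = aj * r0 / lam ^ (length u + length v)"
    using lam_pos \<open>r1 > 0\<close>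
    unfolding retained_fraction_def r0_def [symmetric] r1_def [symmetric]
    by (simp add: field_simps power_add)
  also have "\<dots> \<le> mass (u @ v)"
    using mass_append_ge_entry[OF assms(2), of u] lam_pos
    by (simp add: aj_def r0_def divide_le_eq mult.commute)
  finally show ?thesis .
qed

lemma exists_extension_avoiding_fibre:
  assumes "\<beta> > 1" and bd: "\<forall>t\<in>Kplus E lab. \<forall>n. \<bar>real_of_int (t n)\<bar> \<le> B"
    and sep: "\<And>j. \<exists>t1\<in>Kplus_from E lab j. \<exists>t2\<in>Kplus_from E lab j.
                 4 * B / (\<beta> - 1) / \<beta> ^ N < \<bar>phi \<beta> t1 - phi \<beta> t2\<bar>"
  shows "\<exists>v\<in>words A N. cyl (Kplus E lab) (u @ v) \<inter> {s \<in> Kplus E lab. phi \<beta> s = x} = {} \<and>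
           retained_fraction N * mass u \<le> mass (u @ v)"
proof -
  define a where "a = vL v* Mword E lab u"
  have "Max (range (($) a)) \<in> range (($) a)" by (rule Max_in) auto
  then obtain j where "a $ j = Max (range (($) a))" by (metis rangeE)
  then have jmax: "\<forall>l. (vL v* Mword E lab u) $ l \<le> (vL v* Mword E lab u) $ j"
    by (simp add: a_def)
  obtain t1 t2 where t: "t1 \<in> Kplus_from E lab j" "t2 \<in> Kplus_from E lab j"
    and far: "4 * B / (\<beta> - 1) / \<beta> ^ N < \<bar>phi \<beta> t1 - phi \<beta> t2\<bar>"
    using sep[of j] by blast
  obtain v k where v: "length v = N" "walk E lab j v k"
    and avoid: "\<forall>t\<in>cyl (Kplus E lab) v. phi \<beta> t \<noteq> \<beta> ^ length u * (x - phi_word \<beta> u)"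
    using exists_walk_cyl_avoiding[OF assms(1) bd t far, of "\<beta> ^ length u * (x - phi_word \<beta> u)"]
    by blast
  show ?thesis
  proof (intro bexI conjI)
    show "v \<in> words A N"
      using v set_walk_subset[OF v(2)] labels_in_alphabet by (auto simp: words_def)
    show "cyl (Kplus E lab) (u @ v) \<inter> {s \<in> Kplus E lab. phi \<beta> s = x} = {}"
      by (rule cyl_append_disjoint_fibre[OF assms(1) bd avoid])
    show "retained_fraction N * mass u \<le> mass (u @ v)"
      using mass_append_ge[OF jmax v(2)] v(1) by simp
  qed
qed

lemma fibre_null:
  assumes "\<beta> > 1" and bd: "\<forall>t\<in>Kplus E lab. \<forall>n. \<bar>real_of_int (t n)\<bar> \<le> B"
    and nonconstant: "\<And>j. \<exists>t1\<in>Kplus_from E lab j. \<exists>t2\<in>Kplus_from E lab j. phi \<beta> t1 \<noteq> phi \<beta> t2"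
    and "finite_measure \<mu>" and cyl_sets: "\<And>w. cyl (Kplus E lab) w \<in> sets \<mu>"
    and cyl_measure: "\<And>w. measure \<mu> (cyl (Kplus E lab) w) = mass w"
  shows "measure \<mu> {s \<in> Kplus E lab. phi \<beta> s = x} = 0"
proof -
  define F where "F = {s \<in> Kplus E lab. phi \<beta> s = x}"
  obtain N where sep: "\<And>j. \<exists>t1\<in>Kplus_from E lab j. \<exists>t2\<in>Kplus_from E lab j.
      4 * B / (\<beta> - 1) / \<beta> ^ N < \<bar>phi \<beta> t1 - phi \<beta> t2\<bar>"
    using exists_uniform_separation[OF assms(1) nonconstant] by blast
  define c where "c = min 1 (retained_fraction N)"
  have "c > 0" using retained_fraction_pos by (simp add: c_def)
  have escape: "\<exists>v\<in>words A N. \<not> cyl (Kplus E lab) (u @ v) \<inter> F \<noteq> {} \<and> c * mass u \<le> mass (u @ v)" for u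
  proof -
    obtain v where "v \<in> words A N" "cyl (Kplus E lab) (u @ v) \<inter> F = {}"
      and "retained_fraction N * mass u \<le> mass (u @ v)"
      using exists_extension_avoiding_fibre[OF assms(1) bd sep] unfolding F_def by blast
    moreover have "c * mass u \<le> retained_fraction N * mass u"
      using mass_nonneg by (simp add: c_def mult_right_mono)
    ultimately show ?thesis by force
  qed
  have "measure \<mu> F \<le> (1 - c) ^ k * mass []" for k
  proof -
    have "\<forall>s\<in>Kplus E lab. \<forall>n. s n \<in> A"
      using Kplus_digit_in_labels labels_in_alphabet by blast
    then have "measure \<mu> F \<le> (\<Sum>w\<in>words A (k * N).
        if cyl (Kplus E lab) w \<inter> F \<noteq> {} then measure \<mu> (cyl (Kplus E lab) w) else 0)"
      using cyl_sets by (intro measure_le_sum_cyl_meeting[OF assms(4) finite_alphabet]) (auto simp: F_def)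
    also have "\<dots> = (\<Sum>w\<in>words A (k * N). if cyl (Kplus E lab) w \<inter> F \<noteq> {} then mass w else 0)"
      by (simp add: cyl_measure cong: if_cong)
    also have "\<dots> \<le> (1 - c) ^ k * mass []"
    proof (rule sum_words_geometric_decay[OF finite_alphabet _ mass_nonneg sum_mass_append])
      show "cyl (Kplus E lab) u \<inter> F \<noteq> {}" if "cyl (Kplus E lab) (u @ v) \<inter> F \<noteq> {}" for u v
        using that cyl_append_subset[of "Kplus E lab" u v] by blast
    qed (use escape in \<open>auto simp: c_def\<close>)
    finally show ?thesis .
  qed
  moreover have "(\<lambda>k. (1 - c) ^ k * mass []) \<longlonglongrightarrow> 0"
    using \<open>c > 0\<close> by (intro tendsto_mult_left_zero LIMSEQ_realpow_zero) (auto simp: c_def)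
  ultimately have "measure \<mu> F \<le> 0"
    by (intro LIMSEQ_le_const) auto
  then show ?thesis
    using measure_nonneg[of \<mu> F] unfolding F_def by linarith
qed

end

theorem lemma5:
  fixes A :: "int set" and E :: "('v::finite \<times> 'v) set" and lab :: "'v \<times> 'v \<Rightarrow> int"
    and \<beta> lam :: real and vL vR :: "real^'v" and \<mu> :: "(nat \<Rightarrow> int) measure" and x :: real
  assumes finA: "finite A"
    and labA: "lab ` E \<subseteq> A"
    and prim: "primitive_matrix (Mtot A E lab)"
    and lam_pos: "lam > 0"
    and right_ev: "Mtot A E lab *v vR = lam *\<^sub>R vR"
    and left_ev: "vL v* Mtot A E lab = lam *\<^sub>R vL"
    and vL_pos: "\<forall>i. vL $ i > 0" and vR_pos: "\<forall>i. vR $ i > 0"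
    and norm: "vL \<bullet> vR = 1"
    and pis: "pisot \<beta>"
    and prob: "prob_space \<mu>"
    and space_mu: "space \<mu> = Kplus E lab"
    and sets_mu: "sets \<mu> = sigma_sets (Kplus E lab) {U. openin (Ktop (Kplus E lab)) U}"
    and cyl_mu: "\<forall>ws. measure \<mu> (cyl (Kplus E lab) ws)
                   = vL \<bullet> (Mword E lab ws *v vR) / lam ^ length ws"
    and atom: "measure \<mu> {s \<in> Kplus E lab. phi \<beta> s = x} > 0"
  shows "openin (Ktop (Kplus E lab)) {s \<in> Kplus E lab. phi \<beta> s = x}"
proof -
  interpret eigen_cylinder_mass A E lab lam vL vR
    using finA labA lam_pos right_ev vL_pos vR_pos by unfold_locales
  have "\<beta> > 1" using pis by (simp add: pisot_def)
  obtain B where bd: "\<forall>t\<in>Kplus E lab. \<forall>n. \<bar>real_of_int (t n)\<bar> \<le> B"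
    using Kplus_digits_bounded by blast
  show ?thesis
  proof (cases "\<exists>j. \<exists>t1\<in>Kplus_from E lab j. \<exists>t2\<in>Kplus_from E lab j. phi \<beta> t1 \<noteq> phi \<beta> t2")
    case True
    then have "\<exists>t1\<in>Kplus_from E lab i. \<exists>t2\<in>Kplus_from E lab i. phi \<beta> t1 \<noteq> phi \<beta> t2" for i
      using phi_nonconstant_from_every_vertex[OF prim \<open>\<beta> > 1\<close> bd] by blast
    moreover have "cyl (Kplus E lab) w \<in> sets \<mu>" for w
      unfolding sets_mu by (rule sigma_sets.Basic) (simp add: cyl_openin)
    ultimately have "measure \<mu> {s \<in> Kplus E lab. phi \<beta> s = x} = 0"
      using fibre_null[OF \<open>\<beta> > 1\<close> bd _ prob_space.finite_measure[OF prob]] cyl_mu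
      by (simp add: mass_def)
    with atom show ?thesis by simp
  next
    case False
    then have "finite (phi \<beta> ` Kplus E lab)"
      by (intro finite_phi_image_if_constant_from_vertices) blast
    then show ?thesis
      by (rule fibre_openin_if_finite_image[OF \<open>\<beta> > 1\<close> bd])
  qed
qed

end
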